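(* Let $G$ be a graph whose vertex set is partitioned among agents $1,\dots,m$ (agent $i$ owning $V_i$), and let $M_1$ and $M_2$ be two matchings of $G$. Then there exist two matchings $N_1$ and $N_2$ of $G$ such that for every agent $i$: (1) $|u_i(N_1)-u_i(N_2)|\le 2$, and (2) $u_i(N_1)+u_i(N_2)=u_i(M_1)+u_i(M_2)$.
   Context: For a matching $M$ of $G$ and an agent $i$, $u_i(M)$ denotes the number of vertices of $V_i$ covered by $M$. *)

theory Defs
  imports Main
begin

definition graph :: "'a set \<Rightarrow> 'a set set \<Rightarrow> bool" where
  "graph V E \<longleftrightarrow> finite V \<and> (\<forall>e\<in>E. e \<subseteq> V \<and> card e = 2)"

definition matching :: "'a set set \<Rightarrow> 'a set set \<Rightarrow> bool" where
  "matching E M \<longleftrightarrow> M \<subseteq> E \<and> (\<forall>e1\<in>M. \<forall>e2\<in>M. e1 \<noteq> e2 \<longrightarrow> e1 \<inter> e2 = {})"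

definition agent_partition :: "'a set \<Rightarrow> nat \<Rightarrow> (nat \<Rightarrow> 'a set) \<Rightarrow> bool" where
  "agent_partition V m Vs \<longleftrightarrow>
     (\<Union>i\<in>{1..m}. Vs i) = V \<and>
     (\<forall>i\<in>{1..m}. \<forall>j\<in>{1..m}. i \<noteq> j \<longrightarrow> Vs i \<inter> Vs j = {})"

definition utility :: "'a set \<Rightarrow> 'a set set \<Rightarrow> nat" where
  "utility Vi M = card (Vi \<inter> \<Union>M)"

end

theory Submission
  imports Defs "HOL-Library.Disjoint_Sets"
begin

text \<open>Consider pairs N1, N2 of matchings with the same union and intersection as M1, M2, so
  that every vertex is covered equally often and each agent's total utility is preserved,
  together with a family P of disjoint pairs {x, y} of vertices of one agent such that exactly one
  of x, y is covered by N1 only and the other by N2 only. Choose all this with P of maximal size.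
  Paired vertices cancel in u_i(N1) - u_i(N2). Two unpaired vertices of an agent with opposite
  signs could be added to P. Three unpaired vertices x, y, z of the same sign are leaves of the
  graph N1 \<union> N2 \<union> P, whose maximum degree is 2; exchanging N1 and N2 on the component of x
  flips only the sign of x, so maximality puts y and z into that component, but a path has only
  two leaves. Hence at most two unpaired vertices of each agent contribute, each by \<plusminus>1.\<close>

definition degree :: "'a set set \<Rightarrow> 'a \<Rightarrow> nat" where
  "degree K v = card {e\<in>K. v \<in> e}"

lemma degree_disjoint_family:
  assumes "disjoint N"
  shows "degree N v = of_bool (v \<in> \<Union>N)"
proof (cases "v \<in> \<Union>N")
  case True
  then obtain e where "e \<in> N" "v \<in> e" by blast
  with assms have "{e\<in>N. v \<in> e} = {e}" by (auto simp: disjoint_def)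
  with True show ?thesis by (simp add: degree_def)
next
  case False
  then have "{e\<in>N. v \<in> e} = {}" by blast
  then have "degree N v = 0"
    by (simp only: degree_def card.empty)
  with False show ?thesis
    by simp
qed

lemma degree_Un_le: "degree (A \<union> B) v \<le> degree A v + degree B v"
proof -
  have "{e\<in>A \<union> B. v \<in> e} = {e\<in>A. v \<in> e} \<union> {e\<in>B. v \<in> e}" by blast
  then show ?thesis unfolding degree_def by (simp add: card_Un_le)
qed

lemma degree_Un_Int:
  assumes "finite A" "finite B"
  shows "degree (A \<union> B) v + degree (A \<inter> B) v = degree A v + degree B v"
proof -
  have "{e\<in>A \<union> B. v \<in> e} = {e\<in>A. v \<in> e} \<union> {e\<in>B. v \<in> e}"
    and "{e\<in>A \<inter> B. v \<in> e} = {e\<in>A. v \<in> e} \<inter> {e\<in>B. v \<in> e}" by blast+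
  moreover have "card ({e\<in>A. v \<in> e} \<union> {e\<in>B. v \<in> e}) + card ({e\<in>A. v \<in> e} \<inter> {e\<in>B. v \<in> e})
      = card {e\<in>A. v \<in> e} + card {e\<in>B. v \<in> e}"
    using assms by (intro card_Un_Int[symmetric]) simp_all
  ultimately show ?thesis unfolding degree_def by simp
qed

lemma degree_mono: "K \<subseteq> H \<Longrightarrow> finite H \<Longrightarrow> degree K v \<le> degree H v"
  unfolding degree_def by (rule card_mono) auto

lemma degree_pos: "v \<in> \<Union>K \<Longrightarrow> finite K \<Longrightarrow> 0 < degree K v"
  unfolding degree_def by (auto simp: card_gt_0_iff)

lemma sum_degree:
  assumes "finite K" "\<forall>e\<in>K. finite e"
  shows "(\<Sum>v\<in>\<Union>K. degree K v) = (\<Sum>e\<in>K. card e)"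
proof -
  have "(\<Sum>v\<in>\<Union>K. degree K v) = (\<Sum>v\<in>\<Union>K. \<Sum>e\<in>K. of_bool (v \<in> e))"
    using assms(1) by (simp add: degree_def Int_def)
  also have "\<dots> = (\<Sum>e\<in>K. \<Sum>v\<in>\<Union>K. of_bool (v \<in> e))"
    by (rule sum.swap)
  also have "\<dots> = (\<Sum>e\<in>K. card e)"
  proof (rule sum.cong[OF refl])
    fix e assume "e \<in> K"
    then have "\<Union>K \<inter> {v. v \<in> e} = e" by blast
    then show "(\<Sum>v\<in>\<Union>K. of_bool (v \<in> e)) = card e"
      using assms by simp
  qed
  finally show ?thesis .
qed

text \<open>Double counting: the degrees sum to 2 card K \<ge> 2 card (\<Union>K) - 2, while every leaf
  falls one short of the maximal degree 2.\<close>
lemma card_leaves_le_2: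
  assumes "finite K" and edges: "\<forall>e\<in>K. card e = 2"
    and deg: "\<forall>v. degree K v \<le> 2" and size: "card (\<Union>K) \<le> card K + 1"
  shows "card {v\<in>\<Union>K. degree K v = 1} \<le> 2"
proof -
  have fin: "\<forall>e\<in>K. finite e"
    using edges by (metis card.infinite zero_neq_numeral)
  then have "finite (\<Union>K)"
    using assms(1) by blast
  have "(\<Sum>v\<in>\<Union>K. degree K v + of_bool (degree K v = 1)) \<le> (\<Sum>v\<in>\<Union>K. 2)"
  proof (rule sum_mono)
    fix v assume "v \<in> \<Union>K"
    then have "0 < degree K v"
      using assms(1) by (rule degree_pos)
    with deg[rule_format, of v] show "degree K v + of_bool (degree K v = 1) \<le> 2"
      by (cases "degree K v = 1") auto
  qed
  moreover have "(\<Sum>v\<in>\<Union>K. degree K v) = 2 * card K"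
  proof -
    have "(\<Sum>e\<in>K. card e) = (\<Sum>e\<in>K. 2)"
      using edges by (intro sum.cong) auto
    then show ?thesis
      using sum_degree[OF assms(1) fin] by simp
  qed
  moreover have "(\<Sum>v\<in>\<Union>K. of_bool (degree K v = 1)) = card {v\<in>\<Union>K. degree K v = 1}"
    using \<open>finite (\<Union>K)\<close> by (simp add: Int_def)
  ultimately have "2 * card K + card {v\<in>\<Union>K. degree K v = 1} \<le> 2 * card (\<Union>K)"
    by (simp add: sum.distrib)
  with size show ?thesis
    by linarith
qed

definition component_closed :: "'a set set \<Rightarrow> 'a set set \<Rightarrow> bool" where
  "component_closed H K \<longleftrightarrow> (\<forall>f\<in>H. f \<inter> \<Union>K \<noteq> {} \<longrightarrow> f \<in> K)"

lemma component_closed_mono: "component_closed H K \<Longrightarrow> H' \<subseteq> H \<Longrightarrow> component_closed H' K"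
  unfolding component_closed_def by blast

lemma card_Union_insert_touching:
  assumes "finite (\<Union>K)" "card f = 2" "f \<inter> \<Union>K \<noteq> {}"
  shows "card (\<Union>(insert f K)) \<le> card (\<Union>K) + 1"
proof -
  have "finite f"
    using assms(2) by (metis card.infinite zero_neq_numeral)
  then have "card (f - \<Union>K) = card f - card (f \<inter> \<Union>K)"
    by (intro card_Diff_subset_Int) simp
  moreover have "0 < card (f \<inter> \<Union>K)"
    using \<open>finite f\<close> assms(3) by (simp add: card_gt_0_iff)
  ultimately have "card (f - \<Union>K) \<le> 1"
    using assms(2) by linarith
  moreover have "\<Union>(insert f K) = (f - \<Union>K) \<union> \<Union>K"
    by blast
  then have "card (\<Union>(insert f K)) \<le> card (f - \<Union>K) + card (\<Union>K)"
    by (simp only: card_Un_le)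
  ultimately show ?thesis
    by linarith
qed

text \<open>A maximal subfamily with at most one vertex more than edges cannot be extended by any
  touching edge, so it is a union of connected components.\<close>
lemma ex_component_closed_subfamily:
  assumes "finite H" and edges: "\<forall>f\<in>H. card f = 2" and "e \<in> H"
  obtains K where "K \<subseteq> H" "e \<in> K" "card (\<Union>K) \<le> card K + 1" "component_closed H K"
proof -
  define Q where "Q K \<longleftrightarrow> K \<subseteq> H \<and> e \<in> K \<and> card (\<Union>K) \<le> card K + 1" for K
  have "Q {e}"
    using assms(3) edges by (simp add: Q_def)
  moreover have "\<forall>K. Q K \<longrightarrow> card K < card H + 1"
    using assms(1) by (auto simp: Q_def less_Suc_eq_le card_mono)
  ultimately obtain K where "Q K" and greatest: "\<forall>K'. Q K' \<longrightarrow> card K' \<le> card K"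
    using ex_has_greatest_nat[of Q "{e}" card "card H + 1"] by blast
  then have K: "K \<subseteq> H" "e \<in> K" "card (\<Union>K) \<le> card K + 1"
    by (simp_all add: Q_def)
  have "finite K"
    using K(1) assms(1) finite_subset by blast
  have "finite (\<Union>K)"
    using \<open>finite K\<close> K(1) edges by (metis card.infinite finite_Union subsetD zero_neq_numeral)
  have "component_closed H K"
    unfolding component_closed_def
  proof (intro ballI impI)
    fix f assume "f \<in> H" "f \<inter> \<Union>K \<noteq> {}"
    show "f \<in> K"
    proof (rule ccontr)
      assume "f \<notin> K"
      have "card (\<Union>(insert f K)) \<le> card (insert f K) + 1"
        using card_Union_insert_touching[OF \<open>finite (\<Union>K)\<close> _ \<open>f \<inter> \<Union>K \<noteq> {}\<close>]
          edges \<open>f \<in> H\<close> K(3) \<open>f \<notin> K\<close> \<open>finite K\<close> by fastforce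
      then have "Q (insert f K)"
        using K \<open>f \<in> H\<close> by (simp add: Q_def)
      then show False
        using greatest \<open>f \<notin> K\<close> \<open>finite K\<close> by fastforce
    qed
  qed
  with K show ?thesis
    using that by blast
qed

definition cover_diff :: "'a set set \<Rightarrow> 'a set set \<Rightarrow> 'a \<Rightarrow> int" where
  "cover_diff N1 N2 v = of_bool (v \<in> \<Union>N1) - of_bool (v \<in> \<Union>N2)"

lemma cover_diff_opposite:
  "cover_diff N1 N2 v \<noteq> 0 \<Longrightarrow> cover_diff N1 N2 w \<noteq> 0 \<Longrightarrow> cover_diff N1 N2 w \<noteq> cover_diff N1 N2 v
    \<Longrightarrow> cover_diff N1 N2 w = - cover_diff N1 N2 v"
  unfolding cover_diff_def
  by (cases "v \<in> \<Union>N1"; cases "v \<in> \<Union>N2"; cases "w \<in> \<Union>N1"; cases "w \<in> \<Union>N2") simp_all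

lemma abs_cover_diff: "\<bar>cover_diff N1 N2 v\<bar> = of_bool (cover_diff N1 N2 v \<noteq> 0)"
  unfolding cover_diff_def by (cases "v \<in> \<Union>N1"; cases "v \<in> \<Union>N2") simp_all

definition exchange :: "'a set set \<Rightarrow> 'a set set \<Rightarrow> 'a set set \<Rightarrow> 'a set set" where
  "exchange K N1 N2 = (N1 - K) \<union> (N2 \<inter> K)"

lemma mem_Union_exchange:
  assumes "component_closed (N1 \<union> N2) K"
  shows "v \<in> \<Union>(exchange K N1 N2) \<longleftrightarrow> (if v \<in> \<Union>K then v \<in> \<Union>N2 else v \<in> \<Union>N1)"
proof (cases "v \<in> \<Union>K")
  case True
  have "e \<in> K" if "e \<in> N1 \<union> N2" "v \<in> e" for e
    using assms that True unfolding component_closed_def by blast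
  with True show ?thesis
    unfolding exchange_def by auto
next
  case False
  then show ?thesis
    unfolding exchange_def by auto
qed

lemma cover_diff_exchange:
  assumes "component_closed (N1 \<union> N2) K"
  shows "cover_diff (exchange K N1 N2) (exchange K N2 N1) v =
    (if v \<in> \<Union>K then - cover_diff N1 N2 v else cover_diff N1 N2 v)"
proof -
  have swapped: "component_closed (N2 \<union> N1) K"
    using assms by (simp add: Un_commute)
  show ?thesis
    unfolding cover_diff_def mem_Union_exchange[OF assms] mem_Union_exchange[OF swapped] by simp
qed

lemma matching_exchange:
  assumes "matching E N1" "matching E N2" "component_closed (N1 \<union> N2) K"
  shows "matching E (exchange K N1 N2)"
proof -
  have separated: "a \<inter> b = {}" if "a \<in> N1 - K" "b \<in> K" for a b
    using assms(3) that unfolding component_closed_def by blast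
  show ?thesis
    unfolding matching_def
  proof (intro conjI ballI impI)
    show "exchange K N1 N2 \<subseteq> E"
      using assms(1,2) unfolding matching_def exchange_def by blast
  next
    fix e1 e2 assume e: "e1 \<in> exchange K N1 N2" "e2 \<in> exchange K N1 N2" "e1 \<noteq> e2"
    then consider "e1 \<in> N1" "e2 \<in> N1" | "e1 \<in> N2" "e2 \<in> N2" | "e1 \<in> N1 - K" "e2 \<in> K"
      | "e2 \<in> N1 - K" "e1 \<in> K"
      unfolding exchange_def by blast
    then show "e1 \<inter> e2 = {}"
    proof cases
      case 1
      with assms(1) e(3) show ?thesis unfolding matching_def by blast
    next
      case 2
      with assms(2) e(3) show ?thesis unfolding matching_def by blast
    next
      case 3
      then show ?thesis by (rule separated)
    next
      case 4
      then show ?thesis using separated by blast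
    qed
  qed
qed

lemma matching_disjoint: "matching E N \<Longrightarrow> disjoint N"
  unfolding matching_def disjoint_def by blast

lemma degree_Un_matchings:
  assumes "matching E N1" "matching E N2"
  shows "degree (N1 \<union> N2) v \<le> of_bool (v \<in> \<Union>N1) + of_bool (v \<in> \<Union>N2)"
  using degree_Un_le[of N1 N2 v] assms
  by (simp add: degree_disjoint_family matching_disjoint)

lemma utility_eq_sum:
  assumes "finite A"
  shows "utility A N = (\<Sum>v\<in>A. of_bool (v \<in> \<Union>N))"
  using assms by (simp add: utility_def Int_def)

lemma utility_diff_eq_sum_cover_diff:
  assumes "finite A"
  shows "int (utility A N1) - int (utility A N2) = (\<Sum>v\<in>A. cover_diff N1 N2 v)"
  using assms by (simp add: utility_eq_sum cover_diff_def sum_subtractf)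

definition redistributes ::
    "'a set set \<Rightarrow> 'a set set \<Rightarrow> 'a set set \<Rightarrow> 'a set set \<Rightarrow> 'a set set \<Rightarrow> bool" where
  "redistributes E M1 M2 N1 N2 \<longleftrightarrow>
     matching E N1 \<and> matching E N2 \<and> N1 \<union> N2 = M1 \<union> M2 \<and> N1 \<inter> N2 = M1 \<inter> M2"

lemma redistributes_refl: "matching E M1 \<Longrightarrow> matching E M2 \<Longrightarrow> redistributes E M1 M2 M1 M2"
  by (simp add: redistributes_def)

lemma redistributes_exchange:
  assumes "redistributes E M1 M2 N1 N2" "component_closed (N1 \<union> N2) K"
  shows "redistributes E M1 M2 (exchange K N1 N2) (exchange K N2 N1)"
proof -
  have "component_closed (N2 \<union> N1) K"
    using assms(2) by (simp add: Un_commute)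
  moreover have "exchange K N1 N2 \<union> exchange K N2 N1 = N1 \<union> N2"
    and "exchange K N1 N2 \<inter> exchange K N2 N1 = N1 \<inter> N2"
    unfolding exchange_def by blast+
  ultimately show ?thesis
    using assms unfolding redistributes_def by (simp add: matching_exchange)
qed

text \<open>Each vertex is covered as often by the pair N1, N2 as by M1, M2: count the covering
  edges with multiplicity, once in the union and once more in the intersection.\<close>
lemma covered_count_redistributes:
  assumes "redistributes E M1 M2 N1 N2" "matching E M1" "matching E M2" "finite (M1 \<union> M2)"
  shows "of_bool (v \<in> \<Union>N1) + of_bool (v \<in> \<Union>N2) =
    (of_bool (v \<in> \<Union>M1) + of_bool (v \<in> \<Union>M2) :: nat)"
proof -
  have N: "matching E N1" "matching E N2" "N1 \<union> N2 = M1 \<union> M2" "N1 \<inter> N2 = M1 \<inter> M2"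
    using assms(1) by (simp_all add: redistributes_def)
  then have "finite N1" "finite N2"
    using assms(4) by (metis finite_Un)+
  then have "degree N1 v + degree N2 v = degree M1 v + degree M2 v"
    using degree_Un_Int N(3,4) assms(4) by (metis finite_Un)
  then show ?thesis
    using N(1,2) assms(2,3) by (simp add: degree_disjoint_family matching_disjoint)
qed

lemma utility_add_redistributes:
  assumes "redistributes E M1 M2 N1 N2" "matching E M1" "matching E M2" "finite (M1 \<union> M2)"
    and "finite A"
  shows "utility A N1 + utility A N2 = utility A M1 + utility A M2"
  unfolding utility_eq_sum[OF assms(5)] sum.distrib[symmetric]
  by (rule sum.cong[OF refl]) (rule covered_count_redistributes[OF assms(1-4)])

definition balanced_pairs ::
    "(nat \<Rightarrow> 'a set) \<Rightarrow> nat \<Rightarrow> 'a set set \<Rightarrow> 'a set set \<Rightarrow> 'a set set \<Rightarrow> bool" where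
  "balanced_pairs Vs m N1 N2 P \<longleftrightarrow> disjoint P \<and>
     (\<forall>p\<in>P. \<exists>x y i. p = {x, y} \<and> x \<noteq> y \<and> i \<in> {1..m} \<and> x \<in> Vs i \<and> y \<in> Vs i \<and>
        cover_diff N1 N2 x \<noteq> 0 \<and> cover_diff N1 N2 y = - cover_diff N1 N2 x)"

lemma balanced_pairsE:
  assumes "balanced_pairs Vs m N1 N2 P" "p \<in> P"
  obtains x y i where "p = {x, y}" "x \<noteq> y" "i \<in> {1..m}" "x \<in> Vs i" "y \<in> Vs i"
    "cover_diff N1 N2 x \<noteq> 0" "cover_diff N1 N2 y = - cover_diff N1 N2 x"
  using assms unfolding balanced_pairs_def by blast

lemma balanced_pairs_empty: "balanced_pairs Vs m N1 N2 {}"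
  by (simp add: balanced_pairs_def)

lemma balanced_pairs_insert:
  assumes "balanced_pairs Vs m N1 N2 P" "x \<notin> \<Union>P" "y \<notin> \<Union>P" "x \<noteq> y"
    "i \<in> {1..m}" "x \<in> Vs i" "y \<in> Vs i"
    "cover_diff N1 N2 x \<noteq> 0" "cover_diff N1 N2 y = - cover_diff N1 N2 x"
  shows "balanced_pairs Vs m N1 N2 (insert {x, y} P)"
proof -
  have "disjoint (insert {x, y} P)"
    using assms(1-3) by (auto simp: balanced_pairs_def pairwise_insert disjnt_def)
  moreover have "\<exists>x' y' i'. {x, y} = {x', y'} \<and> x' \<noteq> y' \<and> i' \<in> {1..m} \<and> x' \<in> Vs i' \<and> y' \<in> Vs i' \<and>
      cover_diff N1 N2 x' \<noteq> 0 \<and> cover_diff N1 N2 y' = - cover_diff N1 N2 x'"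
    using assms(4-9) by blast
  ultimately show ?thesis
    using assms(1) unfolding balanced_pairs_def by blast
qed

lemma cover_diff_paired:
  assumes "balanced_pairs Vs m N1 N2 P" "v \<in> \<Union>P"
  shows "cover_diff N1 N2 v \<noteq> 0"
proof -
  obtain p where "p \<in> P" "v \<in> p"
    using assms(2) by blast
  then show ?thesis
    using assms(1) by (elim balanced_pairsE) auto
qed

lemma balanced_pairs_subset_Pow:
  assumes "agent_partition V m Vs" "balanced_pairs Vs m N1 N2 P"
  shows "P \<subseteq> Pow V"
proof
  fix p assume "p \<in> P"
  then obtain x y i where "p = {x, y}" "i \<in> {1..m}" "x \<in> Vs i" "y \<in> Vs i"
    using assms(2) by (elim balanced_pairsE)
  moreover have "Vs i \<subseteq> V"
    using assms(1) \<open>i \<in> {1..m}\<close> unfolding agent_partition_def by blast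
  ultimately show "p \<in> Pow V"
    by blast
qed

text \<open>A pair is either inside the exchanged region or disjoint from it, so the signs of
  both its vertices flip together.\<close>
lemma balanced_pairs_exchange:
  assumes "balanced_pairs Vs m N1 N2 P" "component_closed (N1 \<union> N2 \<union> P) K"
  shows "balanced_pairs Vs m (exchange K N1 N2) (exchange K N2 N1) P"
  unfolding balanced_pairs_def
proof (intro conjI ballI)
  show "disjoint P"
    using assms(1) by (simp add: balanced_pairs_def)
next
  fix p assume "p \<in> P"
  obtain x y i where p: "p = {x, y}" "x \<noteq> y" "i \<in> {1..m}" "x \<in> Vs i" "y \<in> Vs i"
    "cover_diff N1 N2 x \<noteq> 0" "cover_diff N1 N2 y = - cover_diff N1 N2 x"
    by (rule balanced_pairsE[OF assms(1) \<open>p \<in> P\<close>])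
  have "p \<in> K" if "p \<inter> \<Union>K \<noteq> {}"
    using assms(2) \<open>p \<in> P\<close> that unfolding component_closed_def by blast
  then have iff: "y \<in> \<Union>K \<longleftrightarrow> x \<in> \<Union>K"
    unfolding p(1) by blast
  have closed: "component_closed (N1 \<union> N2) K"
    using assms(2) by (rule component_closed_mono) blast
  let ?d = "cover_diff (exchange K N1 N2) (exchange K N2 N1)"
  have "?d x = (if x \<in> \<Union>K then - cover_diff N1 N2 x else cover_diff N1 N2 x)"
    and "?d y = (if x \<in> \<Union>K then - cover_diff N1 N2 y else cover_diff N1 N2 y)"
    by (simp_all only: cover_diff_exchange[OF closed] iff)
  then have "?d x \<noteq> 0 \<and> ?d y = - ?d x"
    using p(6,7) by (cases "x \<in> \<Union>K") simp_all
  then show "\<exists>x y i. p = {x, y} \<and> x \<noteq> y \<and> i \<in> {1..m} \<and> x \<in> Vs i \<and> y \<in> Vs i \<and>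
      ?d x \<noteq> 0 \<and> ?d y = - ?d x"
    using p(1-5) by blast
qed

lemma sum_cover_diff_paired:
  assumes "agent_partition V m Vs" "balanced_pairs Vs m N1 N2 P" "finite P" "i \<in> {1..m}"
  shows "(\<Sum>v\<in>Vs i \<inter> \<Union>P. cover_diff N1 N2 v) = 0"
proof -
  define Q where "Q = {p\<in>P. p \<subseteq> Vs i}"
  have "Vs i \<inter> \<Union>P = \<Union>Q"
  proof (intro equalityI subsetI)
    fix v assume v: "v \<in> Vs i \<inter> \<Union>P"
    then obtain p where "p \<in> P" "v \<in> p"
      by blast
    then obtain x y j where p: "p = {x, y}" "j \<in> {1..m}" "x \<in> Vs j" "y \<in> Vs j"
      using assms(2) by (elim balanced_pairsE)
    then have "j = i"
      using assms(1,4) v \<open>v \<in> p\<close> unfolding agent_partition_def by blast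
    then show "v \<in> \<Union>Q"
      using p \<open>p \<in> P\<close> \<open>v \<in> p\<close> unfolding Q_def by blast
  qed (auto simp: Q_def)
  have "disjoint Q" "finite Q" "\<forall>p\<in>Q. finite p"
    using assms(2,3) by (auto simp: Q_def balanced_pairs_def disjoint_def elim!: balanced_pairsE)
  then have "(\<Sum>v\<in>\<Union>Q. cover_diff N1 N2 v) = (\<Sum>p\<in>Q. \<Sum>v\<in>p. cover_diff N1 N2 v)"
    using sum.Union_disjoint[of Q "cover_diff N1 N2"] by (simp add: disjoint_def)
  also have "\<dots> = 0"
    using assms(2) unfolding Q_def by (intro sum.neutral) (auto elim!: balanced_pairsE)
  finally show ?thesis
    using \<open>Vs i \<inter> \<Union>P = \<Union>Q\<close> by simp
qed

locale maximal_balanced_pairing =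
  fixes V :: "'a set" and E :: "'a set set" and m :: nat and Vs :: "nat \<Rightarrow> 'a set"
    and M1 M2 N1 N2 P :: "'a set set"
  assumes graph: "graph V E"
    and partition: "agent_partition V m Vs"
    and redistributes: "redistributes E M1 M2 N1 N2"
    and balanced: "balanced_pairs Vs m N1 N2 P"
    and maximal: "\<And>N1' N2' P'. redistributes E M1 M2 N1' N2' \<Longrightarrow> balanced_pairs Vs m N1' N2' P'
      \<Longrightarrow> card P' \<le> card P"
begin

lemma matchings: "matching E N1" "matching E N2"
  using redistributes by (simp_all add: redistributes_def)

lemma edges_subset_Pow: "N1 \<union> N2 \<union> P \<subseteq> Pow V"
proof -
  have "E \<subseteq> Pow V"
    using graph unfolding graph_def by blast
  moreover have "N1 \<subseteq> E" "N2 \<subseteq> E"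
    using matchings unfolding matching_def by simp_all
  ultimately show ?thesis
    using balanced_pairs_subset_Pow[OF partition balanced] by blast
qed

lemma finite_edges: "finite (N1 \<union> N2 \<union> P)"
  using edges_subset_Pow graph unfolding graph_def by (meson finite_Pow_iff finite_subset)

lemma finite_agent_vertices: "i \<in> {1..m} \<Longrightarrow> finite (Vs i)"
  using partition graph unfolding agent_partition_def graph_def by (metis UN_upper finite_subset)

lemma card_edge: "f \<in> N1 \<union> N2 \<union> P \<Longrightarrow> card f = 2"
  using matchings graph balanced unfolding graph_def matching_def
  by (auto elim: balanced_pairsE)

lemma degree_le_covers:
  "degree (N1 \<union> N2 \<union> P) v \<le> of_bool (v \<in> \<Union>N1) + of_bool (v \<in> \<Union>N2) + of_bool (v \<in> \<Union>P)"
proof -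
  have "disjoint P"
    using balanced by (simp add: balanced_pairs_def)
  then show ?thesis
    using degree_Un_le[of "N1 \<union> N2" P v] degree_Un_matchings[OF matchings, of v]
    by (simp add: degree_disjoint_family)
qed

lemma degree_le_2: "degree (N1 \<union> N2 \<union> P) v \<le> 2"
  using degree_le_covers[of v] cover_diff_paired[OF balanced, of v]
  by (cases "v \<in> \<Union>N1"; cases "v \<in> \<Union>N2"; cases "v \<in> \<Union>P") (simp_all add: cover_diff_def)

lemma degree_unpaired_le_1:
  "cover_diff N1 N2 v \<noteq> 0 \<Longrightarrow> v \<notin> \<Union>P \<Longrightarrow> degree (N1 \<union> N2 \<union> P) v \<le> 1"
  using degree_le_covers[of v]
  by (cases "v \<in> \<Union>N1"; cases "v \<in> \<Union>N2") (simp_all add: cover_diff_def)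

lemma no_augmenting_pair:
  assumes "redistributes E M1 M2 N1' N2'" "balanced_pairs Vs m N1' N2' P"
    and "i \<in> {1..m}" "x \<in> Vs i - \<Union>P" "y \<in> Vs i - \<Union>P" "x \<noteq> y"
    and "cover_diff N1' N2' x \<noteq> 0" "cover_diff N1' N2' y = - cover_diff N1' N2' x"
  shows False
proof -
  have "balanced_pairs Vs m N1' N2' (insert {x, y} P)"
    using assms(4,5) by (intro balanced_pairs_insert[OF assms(2) _ _ assms(6,3) _ _ assms(7,8)]) auto
  then have "card (insert {x, y} P) \<le> card P"
    by (rule maximal[OF assms(1)])
  moreover have "{x, y} \<notin> P" "finite P"
    using assms(4) finite_edges by (auto intro: finite_subset)
  ultimately show False
    by simp
qed

text \<open>Exchanging N1 and N2 on a component containing x flips the sign of x only; an unpaired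
  vertex w of the same agent and sign outside that component could then be paired with x.\<close>
lemma same_sign_in_component:
  assumes "K \<subseteq> N1 \<union> N2 \<union> P" "component_closed (N1 \<union> N2 \<union> P) K" "x \<in> \<Union>K"
    and "i \<in> {1..m}" "x \<in> Vs i - \<Union>P" "w \<in> Vs i - \<Union>P" "w \<noteq> x"
    and "cover_diff N1 N2 x \<noteq> 0" "cover_diff N1 N2 w = cover_diff N1 N2 x"
  shows "w \<in> \<Union>K"
proof (rule ccontr)
  assume "w \<notin> \<Union>K"
  have closed: "component_closed (N1 \<union> N2) K"
    using assms(2) by (rule component_closed_mono) blast
  let ?d = "cover_diff (exchange K N1 N2) (exchange K N2 N1)"
  have "?d x = - cover_diff N1 N2 x" "?d w = cover_diff N1 N2 x"
    using cover_diff_exchange[OF closed] assms(3,9) \<open>w \<notin> \<Union>K\<close> by simp_all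
  then show False
    using no_augmenting_pair[OF redistributes_exchange[OF redistributes closed]
        balanced_pairs_exchange[OF balanced assms(2)] assms(4,5,6) assms(7)[symmetric]] assms(8)
    by simp
qed

lemma degree_subfamily_le_2: "K \<subseteq> N1 \<union> N2 \<union> P \<Longrightarrow> degree K v \<le> 2"
  using degree_mono[OF _ finite_edges] degree_le_2 le_trans by blast

lemma degree_subfamily_unpaired:
  assumes "K \<subseteq> N1 \<union> N2 \<union> P" "v \<in> \<Union>K" "v \<notin> \<Union>P" "cover_diff N1 N2 v \<noteq> 0"
  shows "degree K v = 1"
proof -
  have "degree K v \<le> 1"
    using degree_mono[OF assms(1) finite_edges, of v] degree_unpaired_le_1[OF assms(4,3)] by simp
  moreover have "0 < degree K v"
    using assms(2) finite_subset[OF assms(1) finite_edges] by (rule degree_pos)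
  ultimately show ?thesis
    by simp
qed

lemma no_three_unpaired_same_sign:
  assumes "i \<in> {1..m}" "x \<in> Vs i - \<Union>P" "y \<in> Vs i - \<Union>P" "z \<in> Vs i - \<Union>P"
    and "x \<noteq> y" "y \<noteq> z" "x \<noteq> z"
    and "cover_diff N1 N2 x \<noteq> 0" "cover_diff N1 N2 y = cover_diff N1 N2 x"
    "cover_diff N1 N2 z = cover_diff N1 N2 x"
  shows False
proof -
  obtain e where "e \<in> N1 \<union> N2" "x \<in> e"
    using assms(8) unfolding cover_diff_def by (cases "x \<in> \<Union>N1") auto
  then obtain K where K: "K \<subseteq> N1 \<union> N2 \<union> P" "e \<in> K" "card (\<Union>K) \<le> card K + 1"
    "component_closed (N1 \<union> N2 \<union> P) K"
    using ex_component_closed_subfamily[OF finite_edges] card_edge by blast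
  have "finite K"
    using K(1) finite_edges by (rule finite_subset)
  have "\<Union>K \<subseteq> V"
    using K(1) edges_subset_Pow by blast
  then have "finite (\<Union>K)"
    using graph unfolding graph_def by (meson finite_subset)
  have "x \<in> \<Union>K"
    using K(2) \<open>x \<in> e\<close> by blast
  then have "y \<in> \<Union>K" "z \<in> \<Union>K"
    using same_sign_in_component[OF K(1,4) _ assms(1,2)] assms by auto
  with \<open>x \<in> \<Union>K\<close> have "{x, y, z} \<subseteq> {v\<in>\<Union>K. degree K v = 1}"
    using assms(2-4,8-10) degree_subfamily_unpaired[OF K(1)] by auto
  moreover have "finite {v\<in>\<Union>K. degree K v = 1}"
    using \<open>finite (\<Union>K)\<close> by (rule finite_subset[rotated]) blast
  ultimately have "card {x, y, z} \<le> card {v\<in>\<Union>K. degree K v = 1}"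
    by (simp add: card_mono)
  also have "\<dots> \<le> 2"
    using card_leaves_le_2[OF \<open>finite K\<close> _ _ K(3)] K(1) card_edge degree_subfamily_le_2 by blast
  finally show False
    using assms(5-7) by simp
qed

lemma card_unpaired_le_2:
  assumes "i \<in> {1..m}"
  shows "card {v \<in> Vs i - \<Union>P. cover_diff N1 N2 v \<noteq> 0} \<le> 2"
proof (rule ccontr)
  assume "\<not> ?thesis"
  then have "3 \<le> card {v \<in> Vs i - \<Union>P. cover_diff N1 N2 v \<noteq> 0}"
    by simp
  then obtain T where "T \<subseteq> {v \<in> Vs i - \<Union>P. cover_diff N1 N2 v \<noteq> 0}" "card T = 3"
    by (rule obtain_subset_with_card_n)
  moreover obtain x y z where "T = {x, y, z}" "x \<noteq> y" "y \<noteq> z" "x \<noteq> z"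
    using \<open>card T = 3\<close> by (auto simp: card_3_iff)
  ultimately have xyz: "x \<in> Vs i - \<Union>P" "y \<in> Vs i - \<Union>P" "z \<in> Vs i - \<Union>P"
    "x \<noteq> y" "y \<noteq> z" "x \<noteq> z" "cover_diff N1 N2 x \<noteq> 0" "cover_diff N1 N2 y \<noteq> 0"
    "cover_diff N1 N2 z \<noteq> 0"
    by auto
  have same_sign: "cover_diff N1 N2 w = cover_diff N1 N2 x"
    if "w \<in> Vs i - \<Union>P" "w \<noteq> x" "cover_diff N1 N2 w \<noteq> 0" for w
  proof (rule ccontr)
    assume "cover_diff N1 N2 w \<noteq> cover_diff N1 N2 x"
    with xyz(7) that(3) have "cover_diff N1 N2 w = - cover_diff N1 N2 x"
      by (rule cover_diff_opposite)
    then show False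
      using no_augmenting_pair[OF redistributes balanced assms xyz(1) that(1)] that(2) xyz(7) by simp
  qed
  show False
    using no_three_unpaired_same_sign[OF assms xyz(1-7)]
      same_sign[OF xyz(2) _ xyz(8)] same_sign[OF xyz(3) _ xyz(9)] xyz(4,6) by simp
qed

lemma utility_diff_le_2:
  assumes "i \<in> {1..m}"
  shows "\<bar>int (utility (Vs i) N1) - int (utility (Vs i) N2)\<bar> \<le> 2"
proof -
  have "finite (Vs i)"
    using assms by (rule finite_agent_vertices)
  let ?d = "cover_diff N1 N2"
  have "int (utility (Vs i) N1) - int (utility (Vs i) N2) = (\<Sum>v\<in>Vs i - \<Union>P. ?d v)"
    using utility_diff_eq_sum_cover_diff[OF \<open>finite (Vs i)\<close>]
      sum.Int_Diff[OF \<open>finite (Vs i)\<close>, of ?d "\<Union>P"]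
      sum_cover_diff_paired[OF partition balanced _ assms] finite_edges
    by (simp add: finite_subset)
  also have "\<bar>\<dots>\<bar> \<le> (\<Sum>v\<in>Vs i - \<Union>P. \<bar>?d v\<bar>)"
    by (rule sum_abs)
  also have "\<dots> = int (card {v \<in> Vs i - \<Union>P. ?d v \<noteq> 0})"
    using \<open>finite (Vs i)\<close> by (simp add: abs_cover_diff Int_def)
  also have "\<dots> \<le> 2"
    using card_unpaired_le_2[OF assms] by simp
  finally show ?thesis .
qed

end

lemma ex_maximal_balanced_pairing:
  assumes "graph V E" "agent_partition V m Vs" "matching E M1" "matching E M2"
  shows "\<exists>N1 N2 P. maximal_balanced_pairing V E m Vs M1 M2 N1 N2 P"
proof -
  define R where "R T \<longleftrightarrow> redistributes E M1 M2 (fst T) (fst (snd T)) \<and>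
    balanced_pairs Vs m (fst T) (fst (snd T)) (snd (snd T))" for T
  have "R (M1, M2, {})"
    using assms(3,4) by (simp add: R_def redistributes_refl balanced_pairs_empty)
  moreover have "\<forall>T. R T \<longrightarrow> card (snd (snd T)) < card (Pow V) + 1"
    using balanced_pairs_subset_Pow[OF assms(2)] assms(1) unfolding R_def graph_def
    by (metis card_mono finite_Pow_iff less_Suc_eq_le Suc_eq_plus1)
  ultimately obtain T where "R T" "\<forall>T'. R T' \<longrightarrow> card (snd (snd T')) \<le> card (snd (snd T))"
    using ex_has_greatest_nat[of R _ "\<lambda>T. card (snd (snd T))"] by blast
  then have "maximal_balanced_pairing V E m Vs M1 M2 (fst T) (fst (snd T)) (snd (snd T))"
    using assms(1,2) unfolding maximal_balanced_pairing_def R_def by fastforce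
  then show ?thesis
    by blast
qed

theorem lemma1:
  fixes V :: "'a set" and E :: "'a set set" and m :: nat and Vs :: "nat \<Rightarrow> 'a set"
    and M1 M2 :: "'a set set"
  assumes "graph V E"
    and "agent_partition V m Vs"
    and "matching E M1" and "matching E M2"
  shows "\<exists>N1 N2. matching E N1 \<and> matching E N2 \<and>
           (\<forall>i\<in>{1..m}.
              \<bar>int (utility (Vs i) N1) - int (utility (Vs i) N2)\<bar> \<le> 2 \<and>
              utility (Vs i) N1 + utility (Vs i) N2 = utility (Vs i) M1 + utility (Vs i) M2)"
proof -
  obtain N1 N2 P where "maximal_balanced_pairing V E m Vs M1 M2 N1 N2 P"
    using ex_maximal_balanced_pairing[OF assms] by blast
  then interpret maximal_balanced_pairing V E m Vs M1 M2 N1 N2 P .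
  have "finite (M1 \<union> M2)"
    using finite_edges redistributes unfolding redistributes_def by (metis finite_Un)
  then show ?thesis
    using matchings utility_diff_le_2 finite_agent_vertices
      utility_add_redistributes[OF redistributes assms(3,4)]
    by blast
qed

end
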